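(* Let $\epsilon>0$ and let $E\subset[0,3/2-\epsilon]$ be a measurable set with Lebesgue measure $m(E)=1$, and suppose $E$ tiles $\mathbb{R}$ with respect to $\mathbb{Z}$. Then $\widehat{\chi_E}(\xi)\neq 0$ for all $\xi$ with $-1/2\leq\xi\leq 1/2$.
   Context: $E$ tiles $\mathbb{R}$ with respect to $\mathbb{Z}$ means $\sum_{k\in\mathbb{Z}}\chi_E(x-k)=1$ for almost every $x\in\mathbb{R}$, where $\chi_E$ is the indicator function of $E$. The Fourier transform is $\widehat{\chi_E}(\xi)=\int_E e^{-2\pi i x\xi}\,dx$. *)

theory Defs
  imports "HOL-Analysis.Analysis"
begin

definition tiles_by_Z :: "real set \<Rightarrow> bool" where
  "tiles_by_Z E \<longleftrightarrow>
     (AE x in lebesgue. (\<Sum>\<^sub>\<infinity>k::int. (indicator E (x - of_int k) :: real)) = 1)"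

definition fourier_indicator :: "real set \<Rightarrow> real \<Rightarrow> complex" where
  "fourier_indicator E \<xi> = (LINT x:E|lebesgue. cis (- 2 * pi * x * \<xi>))"

end

theory Submission
  imports Defs
begin

text \<open>
  Because E lies in [0, 3/2), the tiling condition says that for almost every x in [0, 1)
  exactly one of x and x + 1 belongs to E. Hence, with C = {x in [0, 1). x + 1 in E}, which
  lies in [0, 1/2), and w = cis (-2 pi xi), the transform splits as
  hat(chi_E) = hat(chi_[0,1)) + (w - 1) hat(chi_C) = (w - 1) (i / (2 pi xi) + hat(chi_C))
  for xi <> 0. For 0 < |xi| <= 1/2 we have w <> 1, and Re hat(chi_C)(xi) is the integral of
  cos (2 pi x xi) over C, whose integrand is positive because |2 pi x xi| < pi/2 on C;
  so hat(chi_C)(xi) is either 0 or has positive real part, and in neither case can it cancel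
  the nonzero imaginary number i / (2 pi xi). At xi = 0 the transform is m(E) = 1.
\<close>

lemma borel_measurable_fourier_kernel:
  "(\<lambda>x. cis (- 2 * pi * x * \<xi>)) \<in> borel_measurable lebesgue"
  by (intro borel_measurable_continuous_onI continuous_intros
      measurable_completion[of _ lborel, unfolded measurable_lborel2])

lemma set_integrable_fourier_kernel:
  assumes "A \<in> lmeasurable"
  shows "set_integrable lebesgue A (\<lambda>x. cis (- 2 * pi * x * \<xi>))"
  unfolding set_integrable_def using assms borel_measurable_fourier_kernel
  by (intro integrableI_bounded_set_indicator[where B=1]) (auto simp: fmeasurable_def)

lemma fourier_indicator_cong_AE:
  assumes "A \<in> sets lebesgue" "B \<in> sets lebesgue" "AE x in lebesgue. x \<in> A \<longleftrightarrow> x \<in> B"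
  shows "fourier_indicator A \<xi> = fourier_indicator B \<xi>"
  unfolding fourier_indicator_def
  using assms borel_measurable_fourier_kernel
  by (intro set_integral_cong_set) (auto simp: set_borel_measurable_def)

lemma fourier_indicator_Un:
  assumes "A \<in> lmeasurable" "B \<in> lmeasurable" "A \<inter> B = {}"
  shows "fourier_indicator (A \<union> B) \<xi> = fourier_indicator A \<xi> + fourier_indicator B \<xi>"
  unfolding fourier_indicator_def
  using assms by (intro set_integral_Un set_integrable_fourier_kernel) auto

lemma fourier_indicator_Diff:
  assumes "A \<in> lmeasurable" "B \<in> sets lebesgue" "B \<subseteq> A"
  shows "fourier_indicator (A - B) \<xi> = fourier_indicator A \<xi> - fourier_indicator B \<xi>"
proof -
  have "B \<in> lmeasurable"
    using fmeasurableI2 assms by blast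
  then have "fourier_indicator ((A - B) \<union> B) \<xi> = fourier_indicator (A - B) \<xi> + fourier_indicator B \<xi>"
    using assms by (intro fourier_indicator_Un fmeasurable_Diff) auto
  moreover have "(A - B) \<union> B = A"
    using assms(3) by blast
  ultimately show ?thesis
    by simp
qed

lemma fourier_indicator_translation:
  "fourier_indicator ((+) t ` A) \<xi> = cis (- 2 * pi * t * \<xi>) * fourier_indicator A \<xi>"
proof -
  have "fourier_indicator ((+) t ` A) \<xi>
      = (\<integral>x. indicator ((+) t ` A) (t + 1 * x) *\<^sub>R cis (- 2 * pi * (t + 1 * x) * \<xi>) \<partial>lebesgue)"
    unfolding fourier_indicator_def set_lebesgue_integral_def
    using lebesgue_integral_real_affine[of 1] by simp
  also have "\<dots> = (\<integral>x. cis (- 2 * pi * t * \<xi>) * (indicator A x *\<^sub>R cis (- 2 * pi * x * \<xi>)) \<partial>lebesgue)"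
    by (intro Bochner_Integration.integral_cong)
       (auto simp: indicator_def cis_mult algebra_simps)
  also have "\<dots> = cis (- 2 * pi * t * \<xi>) * fourier_indicator A \<xi>"
    unfolding fourier_indicator_def set_lebesgue_integral_def by (rule integral_mult_right_zero)
  finally show ?thesis .
qed

lemma fourier_indicator_0:
  assumes "A \<in> lmeasurable"
  shows "fourier_indicator A 0 = measure lebesgue A"
proof -
  have "emeasure lebesgue A \<noteq> \<infinity>" "A \<in> sets lebesgue"
    using assms by (auto simp: fmeasurable_def)
  then show ?thesis
    unfolding fourier_indicator_def by (simp add: set_integral_const scaleR_conv_of_real)
qed

lemma fourier_indicator_interval:
  fixes a b \<xi> :: real
  assumes "a \<le> b" "\<xi> \<noteq> 0"
  shows "fourier_indicator {a..b} \<xi>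
    = (cis (- 2 * pi * b * \<xi>) - cis (- 2 * pi * a * \<xi>)) * (\<i> / (2 * pi * \<xi>))"
proof -
  define G where "G x = cis (- 2 * pi * x * \<xi>) * (\<i> / (2 * pi * \<xi>))" for x
  have "(G has_vector_derivative cis (- 2 * pi * x * \<xi>)) (at x within {a..b})" for x
    unfolding has_vector_derivative_def G_def
    by (rule has_derivative_eq_rhs, (rule derivative_eq_intros | simp)+)
       (use assms in \<open>auto simp: fun_eq_iff field_simps scaleR_conv_of_real\<close>)
  then have "((\<lambda>x. cis (- 2 * pi * x * \<xi>)) has_integral G b - G a) {a..b}"
    using assms(1) by (intro fundamental_theorem_of_calculus) auto
  moreover have "fourier_indicator {a..b} \<xi> = integral {a..b} (\<lambda>x. cis (- 2 * pi * x * \<xi>))"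
    unfolding fourier_indicator_def
    by (intro set_lebesgue_integral_eq_integral set_integrable_fourier_kernel) auto
  ultimately show ?thesis
    unfolding G_def by (simp add: integral_unique left_diff_distrib diff_divide_distrib)
qed

lemma fourier_indicator_unit_interval:
  assumes "\<xi> \<noteq> 0"
  shows "fourier_indicator {0..<1} \<xi> = (cis (- 2 * pi * \<xi>) - 1) * (\<i> / (2 * pi * \<xi>))"
proof -
  have "AE x in lebesgue. x \<noteq> (1::real)"
    using AE_completion[OF AE_lborel_singleton[of "1::real"]] by simp
  then have "fourier_indicator {0..<1} \<xi> = fourier_indicator {0..1} \<xi>"
    by (intro fourier_indicator_cong_AE) (auto elim!: eventually_mono)
  with fourier_indicator_interval[of 0 1] assms show ?thesis
    by simp
qed

lemma lebesgue_sets_translation_preimage: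
  assumes "A \<in> sets lebesgue" "E \<in> sets lebesgue"
  shows "{x \<in> A. x + t \<in> E} \<in> sets lebesgue"
proof -
  have "{x \<in> A. x + t \<in> E} = A \<inter> (+) (- t) ` E"
    by (auto simp: image_iff intro!: bexI[where x="_ + t"])
  then show ?thesis
    using assms lebesgue_sets_translation[OF assms(2), of "- t"] by (simp add: sets.Int)
qed

lemma cis_minus_2pi_ne_1:
  fixes \<xi> :: real
  assumes "\<xi> \<noteq> 0" "\<bar>\<xi>\<bar> < 1"
  shows "cis (- 2 * pi * \<xi>) \<noteq> 1"
proof
  assume "cis (- 2 * pi * \<xi>) = 1"
  then have "cos (- 2 * pi * \<xi>) = 1"
    by (simp add: complex_eq_iff)
  then obtain n :: int where "- 2 * pi * \<xi> = of_int n * 2 * pi"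
    using cos_one_2pi_int by blast
  then have "pi * (\<xi> + of_int n) = 0"
    by (simp add: algebra_simps)
  then have "\<xi> = - of_int n"
    by simp
  with assms have "n \<noteq> 0" "\<bar>of_int n :: real\<bar> < 1"
    by auto
  then show False
    by linarith
qed

lemma infsum_indicator_int_translates:
  fixes E :: "real set"
  assumes "E \<subseteq> {0..<2}" "0 \<le> x" "x < 1"
  shows "(\<Sum>\<^sub>\<infinity>k::int. indicator E (x - of_int k) :: real) = indicator E x + indicator E (x + 1)"
proof -
  have "(\<Sum>\<^sub>\<infinity>k::int. indicator E (x - of_int k) :: real)
      = (\<Sum>\<^sub>\<infinity>k\<in>{0, -1}. indicator E (x - of_int k))"
  proof (rule infsum_cong_neutral)
    fix k :: int
    assume "k \<in> UNIV - {0, -1}"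
    then have "x - of_int k \<notin> {0..<2}"
      using assms(2,3) by (cases "k \<ge> 1") auto
    then show "(indicator E (x - of_int k) :: real) = 0"
      using assms(1) by (auto simp: indicator_def)
  qed auto
  then show ?thesis
    by simp
qed

lemma tiles_by_Z_AE_mem_iff_not_mem_shift:
  assumes "E \<subseteq> {0..<2}" "tiles_by_Z E"
  shows "AE x in lebesgue. x \<in> {0..<1} \<longrightarrow> (x \<in> E \<longleftrightarrow> x + 1 \<notin> E)"
  using assms(2) unfolding tiles_by_Z_def
proof (rule eventually_mono)
  fix x :: real
  assume "(\<Sum>\<^sub>\<infinity>k::int. indicator E (x - of_int k) :: real) = 1"
  then show "x \<in> {0..<1} \<longrightarrow> (x \<in> E \<longleftrightarrow> x + 1 \<notin> E)"
    using infsum_indicator_int_translates[OF assms(1)] by (auto simp: indicator_def)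
qed

lemma fourier_indicator_tile_decomposition:
  assumes "E \<in> sets lebesgue" "E \<subseteq> {0..<2}" "tiles_by_Z E"
  shows "fourier_indicator E \<xi> = fourier_indicator {0..<1} \<xi>
    + (cis (- 2 * pi * \<xi>) - 1) * fourier_indicator {x \<in> {0..<1}. x + 1 \<in> E} \<xi>"
proof -
  define C where "C = {x \<in> {0..<1}. x + 1 \<in> E}"
  have C: "C \<in> sets lebesgue"
    unfolding C_def by (intro lebesgue_sets_translation_preimage assms(1)) simp
  have bounded_lmeasurable: "S \<in> lmeasurable" if "S \<in> sets lebesgue" "S \<subseteq> {0..2::real}" for S
    using that by (intro bounded_set_imp_lmeasurable bounded_subset[OF bounded_closed_interval])
  have E_split: "E = (E \<inter> {0..<1}) \<union> (E \<inter> {1..<2})"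
    using assms(2) by auto
  have "fourier_indicator E \<xi> = fourier_indicator (E \<inter> {0..<1}) \<xi> + fourier_indicator (E \<inter> {1..<2}) \<xi>"
    using assms(1) by (subst E_split, intro fourier_indicator_Un bounded_lmeasurable) auto
  also have "fourier_indicator (E \<inter> {0..<1}) \<xi> = fourier_indicator ({0..<1} - C) \<xi>"
    using tiles_by_Z_AE_mem_iff_not_mem_shift[OF assms(2,3)] assms(1) C
    by (intro fourier_indicator_cong_AE) (auto simp: C_def elim!: eventually_mono)
  also have "\<dots> = fourier_indicator {0..<1} \<xi> - fourier_indicator C \<xi>"
    using C by (intro fourier_indicator_Diff bounded_lmeasurable) (auto simp: C_def)
  also have "E \<inter> {1..<2} = (+) 1 ` C"
    unfolding C_def by (auto simp: image_iff add.commute[of 1] intro!: exI[where x="_ - 1"])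
  also have "fourier_indicator ((+) 1 ` C) \<xi> = cis (- 2 * pi * \<xi>) * fourier_indicator C \<xi>"
    using fourier_indicator_translation[of 1 C \<xi>] by simp
  finally show ?thesis
    unfolding C_def by (simp add: algebra_simps)
qed

lemma fourier_indicator_eq_0_if_Re_eq_0:
  assumes "C \<in> sets lebesgue" "C \<subseteq> {0..<1/2}" "\<bar>\<xi>\<bar> \<le> 1/2"
    and "Re (fourier_indicator C \<xi>) = 0"
  shows "fourier_indicator C \<xi> = 0"
proof -
  have cos_pos: "cos (2 * pi * x * \<xi>) > 0" if "x \<in> C" for x
  proof -
    have x: "0 \<le> x" "x < 1/2"
      using that assms(2) by auto
    then have "\<bar>x * \<xi>\<bar> = x * \<bar>\<xi>\<bar>"
      by (simp add: abs_mult)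
    also have "\<dots> \<le> x * (1/2)"
      using x assms(3) by (intro mult_left_mono) auto
    also have "\<dots> < 1/4"
      using x by simp
    finally have "\<bar>x * \<xi>\<bar> < 1/4" .
    have "\<bar>2 * pi * x * \<xi>\<bar> = 2 * pi * \<bar>x * \<xi>\<bar>"
      by (simp add: abs_mult)
    also have "\<dots> < 2 * pi * (1/4)"
      using \<open>\<bar>x * \<xi>\<bar> < 1/4\<close> by (intro mult_strict_left_mono) auto
    finally have "\<bar>2 * pi * x * \<xi>\<bar> < pi / 2"
      by simp
    then show ?thesis
      by (auto simp only: abs_less_iff intro: cos_gt_zero_pi)
  qed
  have "C \<in> lmeasurable"
    using assms(1,2)
    by (intro bounded_set_imp_lmeasurable bounded_subset[OF bounded_closed_interval, of _ 0 "1/2"]) auto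
  then have int: "integrable lebesgue (\<lambda>x. indicator C x *\<^sub>R cis (- 2 * pi * x * \<xi>))"
    using set_integrable_fourier_kernel unfolding set_integrable_def by blast
  have Re_kernel: "(\<lambda>x. Re (indicator C x *\<^sub>R cis (- 2 * pi * x * \<xi>)))
      = (\<lambda>x. indicator C x * cos (2 * pi * x * \<xi>))"
    by (simp add: fun_eq_iff)
  have "integrable lebesgue (\<lambda>x. indicator C x * cos (2 * pi * x * \<xi>))"
    using integrable_Re[OF int] unfolding Re_kernel .
  moreover have "AE x in lebesgue. 0 \<le> indicator C x * cos (2 * pi * x * \<xi>)"
    using cos_pos by (intro AE_I2) (simp add: indicator_def less_imp_le)
  moreover have "(\<integral>x. indicator C x * cos (2 * pi * x * \<xi>) \<partial>lebesgue) = 0"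
    using integral_Re[OF int] assms(4)
    unfolding Re_kernel fourier_indicator_def set_lebesgue_integral_def by simp
  ultimately have "AE x in lebesgue. indicator C x * cos (2 * pi * x * \<xi>) = 0"
    using integral_nonneg_eq_0_iff_AE by blast
  then have "AE x in lebesgue. x \<in> C \<longleftrightarrow> x \<in> {}"
    by (rule eventually_mono) (use cos_pos in \<open>force simp: indicator_def\<close>)
  then have "fourier_indicator C \<xi> = fourier_indicator {} \<xi>"
    using assms(1) by (intro fourier_indicator_cong_AE) auto
  then show ?thesis
    by (simp add: fourier_indicator_def set_lebesgue_integral_def)
qed

lemma fourier_indicator_ne_0_if_tiles_by_Z:
  assumes "E \<in> sets lebesgue" "E \<subseteq> {0..<3/2}" "tiles_by_Z E"
    and "\<xi> \<noteq> 0" "\<bar>\<xi>\<bar> \<le> 1/2"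
  shows "fourier_indicator E \<xi> \<noteq> 0"
proof -
  define C where "C = {x \<in> {0..<1}. x + 1 \<in> E}"
  have C: "C \<in> sets lebesgue"
    unfolding C_def by (intro lebesgue_sets_translation_preimage assms(1)) simp
  have "C \<subseteq> {0..<1/2}"
    using assms(2) by (auto simp: C_def)
  have "fourier_indicator E \<xi>
      = fourier_indicator {0..<1} \<xi> + (cis (- 2 * pi * \<xi>) - 1) * fourier_indicator C \<xi>"
    unfolding C_def using assms(2) by (intro fourier_indicator_tile_decomposition assms(1,3)) auto
  then have factored: "fourier_indicator E \<xi>
      = (cis (- 2 * pi * \<xi>) - 1) * (\<i> / (2 * pi * \<xi>) + fourier_indicator C \<xi>)"
    unfolding fourier_indicator_unit_interval[OF assms(4)] by (simp only: distrib_left)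
  have w_ne_1: "cis (- 2 * pi * \<xi>) \<noteq> 1"
    using assms(4,5) by (intro cis_minus_2pi_ne_1) auto
  have sum_ne_0: "\<i> / (2 * pi * \<xi>) + fourier_indicator C \<xi> \<noteq> 0"
  proof
    assume sum_0: "\<i> / (2 * pi * \<xi>) + fourier_indicator C \<xi> = 0"
    then have "Re (fourier_indicator C \<xi>) = 0"
      by (simp add: add_eq_0_iff)
    then have "fourier_indicator C \<xi> = 0"
      using C \<open>C \<subseteq> {0..<1/2}\<close> assms(5) fourier_indicator_eq_0_if_Re_eq_0 by blast
    with sum_0 assms(4) show False
      by simp
  qed
  show ?thesis
    using factored w_ne_1 sum_ne_0 by simp
qed

theorem lemma3p2:
  fixes \<epsilon> :: real and E :: "real set"
  assumes "\<epsilon> > 0"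
    and "E \<in> sets lebesgue"
    and "E \<subseteq> {0 .. 3/2 - \<epsilon>}"
    and "emeasure lebesgue E = 1"
    and "tiles_by_Z E"
  shows "\<forall>\<xi>::real. -1/2 \<le> \<xi> \<and> \<xi> \<le> 1/2 \<longrightarrow> fourier_indicator E \<xi> \<noteq> 0"
proof (intro allI impI)
  fix \<xi> :: real
  assume "-1/2 \<le> \<xi> \<and> \<xi> \<le> 1/2"
  then have \<xi>: "\<bar>\<xi>\<bar> \<le> 1/2"
    by auto
  show "fourier_indicator E \<xi> \<noteq> 0"
  proof (cases "\<xi> = 0")
    case True
    have "E \<in> lmeasurable"
      using assms(2,4) by (simp add: fmeasurable_def)
    with True assms(4) show ?thesis
      by (simp add: fourier_indicator_0 measure_def)
  next
    case False
    have "E \<subseteq> {0..<3/2}"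
      using assms(1,3) by auto
    with assms(2,5) False \<xi> show ?thesis
      by (intro fourier_indicator_ne_0_if_tiles_by_Z)
  qed
qed

end
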